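(* Let $(X,\beta,\kappa)$ be an analytically locally compact space (AnLCS). Then $FO(\mathbf{\Sigma}^0_1(X))\leq_m FO(\mathbb{N}_2)$.
   Context: For a topological space $X$, $\mathbf{\Sigma}^0_1(X)$ denotes the lattice of all open subsets of $X$ (ordered by inclusion), and $FO(\mathbb{A})$ denotes the set of first-order sentences (in the signature of $\mathbb{A}$) true in a structure $\mathbb{A}$; for lattices of sets the signature may be taken to be $\{\subseteq\}$. $\leq_m$ is many-one reducibility of sets of sentences (coded by natural numbers). $\mathbb{N}_2=(\omega\cup P(\omega);\omega,P(\omega),\in,+,\times)$ is the structure of second-order arithmetic, so $FO(\mathbb{N}_2)$ is (equivalent to) the full second-order theory of arithmetic. Let $\{D_n\}$ be the canonical numbering of finite subsets of $\omega$. An analytically locally compact space (AnLCS) is a triple $(X,\beta,\kappa)$ where $X$ is a topological space, $\beta:\omega\to P(X)$ is a numbering of a base of $X$ that contains the empty set, and $\kappa:\omega\to P(X)$ is a numbering of some compact subsets of $X$, such that each $\beta_n$ is a union of some sets from $\{\kappa_i\mid i<\omega\}$, and the relation $\{(i,n)\mid \kappa_i\subseteq\bigcup_{a\in D_n}\beta_a\}$ is analytical (i.e. belongs to $\bigcup_n\Sigma^1_n$ of the analytical hierarchy of subsets of $\omega$). *)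

theory Defs
  imports "HOL-Analysis.Abstract_Topology" "HOL-Library.Nat_Bijection"
begin

datatype recf = Zero | Succ | Proj nat | Comp recf "recf list" | Prim recf recf | Mu recf

inductive eval_recf :: "recf \<Rightarrow> nat list \<Rightarrow> nat \<Rightarrow> bool" where
  zero: "eval_recf Zero xs 0"
| succ: "eval_recf Succ (x # xs) (Suc x)"
| proj: "i < length xs \<Longrightarrow> eval_recf (Proj i) xs (xs ! i)"
| comp: "list_all2 (\<lambda>g y. eval_recf g xs y) gs ys \<Longrightarrow> eval_recf f ys z
          \<Longrightarrow> eval_recf (Comp f gs) xs z"
| prim0: "eval_recf f xs y \<Longrightarrow> eval_recf (Prim f g) (0 # xs) y"
| primS: "eval_recf (Prim f g) (n # xs) y \<Longrightarrow> eval_recf g (y # n # xs) z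
          \<Longrightarrow> eval_recf (Prim f g) (Suc n # xs) z"
| mu: "eval_recf f (n # xs) 0 \<Longrightarrow> (\<forall>m<n. \<exists>y. y > 0 \<and> eval_recf f (m # xs) y)
          \<Longrightarrow> eval_recf (Mu f) xs n"

definition computable :: "(nat \<Rightarrow> nat) \<Rightarrow> bool" where
  "computable f \<longleftrightarrow> (\<exists>p. \<forall>n. eval_recf p [n] (f n))"

definition many_one_reducible :: "nat set \<Rightarrow> nat set \<Rightarrow> bool" (infix "\<le>\<^sub>m" 50) where
  "A \<le>\<^sub>m B \<longleftrightarrow> (\<exists>f. computable f \<and> (\<forall>n. n \<in> A \<longleftrightarrow> f n \<in> B))"

datatype fm = Eq nat nat | Rel nat "nat list" | Neg fm | Conj fm fm | Ex nat fm

fun wf_fm :: "(nat \<Rightarrow> nat option) \<Rightarrow> fm \<Rightarrow> bool" where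
  "wf_fm sig (Eq i j) = True"
| "wf_fm sig (Rel r xs) = (sig r = Some (length xs))"
| "wf_fm sig (Neg p) = wf_fm sig p"
| "wf_fm sig (Conj p q) = (wf_fm sig p \<and> wf_fm sig q)"
| "wf_fm sig (Ex x p) = wf_fm sig p"

fun fv :: "fm \<Rightarrow> nat set" where
  "fv (Eq i j) = {i, j}"
| "fv (Rel r xs) = set xs"
| "fv (Neg p) = fv p"
| "fv (Conj p q) = fv p \<union> fv q"
| "fv (Ex x p) = fv p - {x}"

definition sentence :: "(nat \<Rightarrow> nat option) \<Rightarrow> fm \<Rightarrow> bool" where
  "sentence sig p \<longleftrightarrow> wf_fm sig p \<and> fv p = {}"

fun sat :: "'a set \<Rightarrow> (nat \<Rightarrow> 'a list \<Rightarrow> bool) \<Rightarrow> (nat \<Rightarrow> 'a) \<Rightarrow> fm \<Rightarrow> bool" where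
  "sat D I e (Eq i j) = (e i = e j)"
| "sat D I e (Rel r xs) = I r (map e xs)"
| "sat D I e (Neg p) = (\<not> sat D I e p)"
| "sat D I e (Conj p q) = (sat D I e p \<and> sat D I e q)"
| "sat D I e (Ex x p) = (\<exists>a\<in>D. sat D I (e(x := a)) p)"

fun code :: "fm \<Rightarrow> nat" where
  "code (Eq i j) = prod_encode (0, prod_encode (i, j))"
| "code (Rel r xs) = prod_encode (1, prod_encode (r, list_encode xs))"
| "code (Neg p) = prod_encode (2, code p)"
| "code (Conj p q) = prod_encode (3, prod_encode (code p, code q))"
| "code (Ex x p) = prod_encode (4, prod_encode (x, code p))"

definition FO_theory :: "(nat \<Rightarrow> nat option) \<Rightarrow> 'a set \<Rightarrow> (nat \<Rightarrow> 'a list \<Rightarrow> bool) \<Rightarrow> nat set" where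
  "FO_theory sig D I =
     {code p | p. sentence sig p \<and> (\<forall>e. range e \<subseteq> D \<longrightarrow> sat D I e p)}"

definition lat_sig :: "nat \<Rightarrow> nat option" where
  "lat_sig r = (if r = 0 then Some 2 else None)"

definition lat_rel :: "nat \<Rightarrow> 'a set list \<Rightarrow> bool" where
  "lat_rel r xs = (r = 0 \<and> (\<exists>U V. xs = [U, V] \<and> U \<subseteq> V))"

definition FO_open_lattice :: "'a topology \<Rightarrow> nat set" where
  "FO_open_lattice X = FO_theory lat_sig {U. openin X U} lat_rel"

text \<open>Domain: the disjoint union nat + nat set; + and \<times> as ternary graph relations.\<close>
definition n2_sig :: "nat \<Rightarrow> nat option" where
  "n2_sig r = (if r = 0 then Some 1 else if r = 1 then Some 1 else if r = 2 then Some 2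
              else if r = 3 then Some 3 else if r = 4 then Some 3 else None)"

definition n2_rel :: "nat \<Rightarrow> (nat + nat set) list \<Rightarrow> bool" where
  "n2_rel r xs =
     (if r = 0 then (\<exists>n. xs = [Inl n])
      else if r = 1 then (\<exists>A. xs = [Inr A])
      else if r = 2 then (\<exists>n A. xs = [Inl n, Inr A] \<and> n \<in> A)
      else if r = 3 then (\<exists>a b. xs = [Inl a, Inl b, Inl (a + b)])
      else if r = 4 then (\<exists>a b. xs = [Inl a, Inl b, Inl (a * b)])
      else False)"

definition FO_N2 :: "nat set" where
  "FO_N2 = FO_theory n2_sig UNIV n2_rel"

text \<open>Analytical sets: subsets of \<omega> definable in N_2 (= union of all \<Sigma>^1_n).\<close>
definition analytical :: "nat set \<Rightarrow> bool" where
  "analytical A \<longleftrightarrow> (\<exists>p. wf_fm n2_sig p \<and> fv p \<subseteq> {0} \<and>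
      (\<forall>n. n \<in> A \<longleftrightarrow> sat UNIV n2_rel (\<lambda>_. Inl n) p))"

text \<open>D_n = set_decode n is the canonical numbering of finite sets; pairs coded by prod_encode.\<close>
definition AnLCS :: "'a topology \<Rightarrow> (nat \<Rightarrow> 'a set) \<Rightarrow> (nat \<Rightarrow> 'a set) \<Rightarrow> bool" where
  "AnLCS X \<beta> \<kappa> \<longleftrightarrow>
     (\<forall>n. openin X (\<beta> n)) \<and> (\<forall>U. openin X U \<longrightarrow> (\<exists>I. U = \<Union> (\<beta> ` I))) \<and>
     (\<exists>n. \<beta> n = {}) \<and>
     (\<forall>i. compactin X (\<kappa> i)) \<and>
     (\<forall>n. \<exists>I. \<beta> n = \<Union> (\<kappa> ` I)) \<and>
     analytical {prod_encode (i, n) | i n. \<kappa> i \<subseteq> \<Union> (\<beta> ` set_decode n)}"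

end

theory Submission
  imports Defs
begin

(* Every open set of X is a union \<Union>(\<beta> ` I) of basic opens for some I \<subseteq> \<omega>, so quantifiers over
   the lattice of open sets become set quantifiers of second-order arithmetic. Inclusion of such
   unions is expressible in N_2 by local compactness: \<Union>(\<beta> ` I) \<subseteq> \<Union>(\<beta> ` J) holds iff every
   compact \<kappa> i lying in some \<beta> n with n \<in> I is covered by \<beta> ` D_k for some finite D_k \<subseteq> J,
   and this covering relation is analytical by assumption. Substituting its defining formula yields
   a translation of lattice sentences into N_2-sentences which preserves truth and which is
   computable on Goedel numbers. *)

section \<open>Computable functions of fixed arity\<close>

definition computable_nary :: "nat \<Rightarrow> (nat list \<Rightarrow> nat) \<Rightarrow> bool" where
  "computable_nary k f \<longleftrightarrow> (\<exists>p. \<forall>xs. length xs = k \<longrightarrow> eval_recf p xs (f xs))"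

lemma computable_nary_cong:
  "computable_nary k f \<Longrightarrow> (\<And>xs. length xs = k \<Longrightarrow> f xs = g xs) \<Longrightarrow> computable_nary k g"
  unfolding computable_nary_def by auto

lemma computable_nary_imp_computable: "computable_nary 1 f \<Longrightarrow> computable (\<lambda>n. f [n])"
  unfolding computable_nary_def computable_def by (metis length_Cons list.size(3) One_nat_def)

lemma computable_nary_zero: "computable_nary k (\<lambda>_. 0)"
  unfolding computable_nary_def by (rule exI[of _ Zero]) (auto intro: eval_recf.zero)

lemma computable_nary_Suc: "computable_nary k f \<Longrightarrow> computable_nary k (\<lambda>xs. Suc (f xs))"
  unfolding computable_nary_def
  by (metis eval_recf.comp eval_recf.succ list.rel_intros)

lemma computable_nary_const: "computable_nary k (\<lambda>_. c)"
  by (induction c) (use computable_nary_zero computable_nary_Suc in auto)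

lemma computable_nary_nth: "i < k \<Longrightarrow> computable_nary k (\<lambda>xs. xs ! i)"
  unfolding computable_nary_def by (rule exI[of _ "Proj i"]) (auto intro: eval_recf.proj)

lemma computable_nary_comp1:
  "computable_nary 1 g \<Longrightarrow> computable_nary k f \<Longrightarrow> computable_nary k (\<lambda>xs. g [f xs])"
  unfolding computable_nary_def
proof (elim exE)
  fix p q assume p: "\<forall>xs. length xs = 1 \<longrightarrow> eval_recf p xs (g xs)"
    and q: "\<forall>xs. length xs = k \<longrightarrow> eval_recf q xs (f xs)"
  show "\<exists>p. \<forall>xs. length xs = k \<longrightarrow> eval_recf p xs (g [f xs])"
    using p q by (intro exI[of _ "Comp p [q]"]) (auto intro!: eval_recf.comp)
qed

lemma computable_nary_comp2:
  "computable_nary 2 g \<Longrightarrow> computable_nary k f1 \<Longrightarrow> computable_nary k f2 \<Longrightarrow>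
   computable_nary k (\<lambda>xs. g [f1 xs, f2 xs])"
  unfolding computable_nary_def
proof (elim exE)
  fix p q1 q2 assume p: "\<forall>xs. length xs = 2 \<longrightarrow> eval_recf p xs (g xs)"
    and q1: "\<forall>xs. length xs = k \<longrightarrow> eval_recf q1 xs (f1 xs)"
    and q2: "\<forall>xs. length xs = k \<longrightarrow> eval_recf q2 xs (f2 xs)"
  show "\<exists>p. \<forall>xs. length xs = k \<longrightarrow> eval_recf p xs (g [f1 xs, f2 xs])"
    using p q1 q2 by (intro exI[of _ "Comp p [q1, q2]"]) (auto intro!: eval_recf.comp)
qed

lemma computable_nary_compose1:
  "computable_nary 1 (\<lambda>xs. h (xs ! 0)) \<Longrightarrow> computable_nary k a \<Longrightarrow> computable_nary k (\<lambda>xs. h (a xs))"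
  using computable_nary_comp1[of "\<lambda>xs. h (xs ! 0)" k a] by simp

lemma computable_nary_compose2:
  "computable_nary 2 (\<lambda>xs. h (xs ! 0) (xs ! 1)) \<Longrightarrow> computable_nary k a \<Longrightarrow> computable_nary k b \<Longrightarrow>
   computable_nary k (\<lambda>xs. h (a xs) (b xs))"
  using computable_nary_comp2[of "\<lambda>xs. h (xs ! 0) (xs ! 1)" k a b] by simp

fun prim_rec :: "(nat list \<Rightarrow> nat) \<Rightarrow> (nat list \<Rightarrow> nat) \<Rightarrow> nat \<Rightarrow> nat list \<Rightarrow> nat" where
  "prim_rec f g 0 xs = f xs"
| "prim_rec f g (Suc n) xs = g (prim_rec f g n xs # n # xs)"

lemma computable_nary_prim_rec:
  assumes "computable_nary k f" and "computable_nary (Suc (Suc k)) g"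
    and h: "\<And>n ys. prim_rec f g n ys = h (n # ys)"
  shows "computable_nary (Suc k) h"
proof -
  obtain p where p: "\<forall>xs. length xs = k \<longrightarrow> eval_recf p xs (f xs)"
    using assms(1) unfolding computable_nary_def by blast
  obtain q where q: "\<forall>xs. length xs = Suc (Suc k) \<longrightarrow> eval_recf q xs (g xs)"
    using assms(2) unfolding computable_nary_def by blast
  have "eval_recf (Prim p q) (n # ys) (prim_rec f g n ys)" if "length ys = k" for n ys
  proof (induction n)
    case 0 then show ?case using p that by (auto intro: eval_recf.prim0)
  next
    case (Suc n)
    have "eval_recf q (prim_rec f g n ys # n # ys) (g (prim_rec f g n ys # n # ys))"
      using q that by simp
    then show ?case using Suc by (auto intro: eval_recf.primS)
  qed
  then have "\<forall>xs. length xs = Suc k \<longrightarrow> eval_recf (Prim p q) xs (h xs)"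
    by (auto simp: length_Suc_conv h[symmetric])
  then show ?thesis unfolding computable_nary_def by blast
qed

lemma computable_nary_Least:
  assumes "computable_nary (Suc k) f" and ex: "\<And>xs. length xs = k \<Longrightarrow> \<exists>n. f (n # xs) = 0"
  shows "computable_nary k (\<lambda>xs. LEAST n. f (n # xs) = 0)"
proof -
  obtain p where p: "\<forall>xs. length xs = Suc k \<longrightarrow> eval_recf p xs (f xs)"
    using assms(1) unfolding computable_nary_def by blast
  have "eval_recf (Mu p) xs (LEAST n. f (n # xs) = 0)" if l: "length xs = k" for xs
  proof (rule eval_recf.mu)
    have "f ((LEAST n. f (n # xs) = 0) # xs) = 0" using ex[OF l] by (rule LeastI_ex)
    then show "eval_recf p ((LEAST n. f (n # xs) = 0) # xs) 0" using p l by (metis length_Cons)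
    show "\<forall>m<(LEAST n. f (n # xs) = 0). \<exists>y>0. eval_recf p (m # xs) y"
    proof (intro allI impI)
      fix m assume "m < (LEAST n. f (n # xs) = 0)"
      then have "f (m # xs) \<noteq> 0" using not_less_Least by blast
      then show "\<exists>y>0. eval_recf p (m # xs) y" using p l by (intro exI[of _ "f (m # xs)"]) auto
    qed
  qed
  then show ?thesis unfolding computable_nary_def by blast
qed

lemma computable_nary_add:
  assumes "computable_nary k a" "computable_nary k b"
  shows "computable_nary k (\<lambda>xs. a xs + b xs)"
proof -
  have "prim_rec (\<lambda>ys. ys ! 0) (\<lambda>ys. Suc (ys ! 0)) n ys = n + ys ! 0" for n ys
    by (induction n) auto
  then have "computable_nary (Suc 1) (\<lambda>xs. xs ! 0 + xs ! 1)"
    by (intro computable_nary_prim_rec[of 1 "\<lambda>ys. ys ! 0" "\<lambda>ys. Suc (ys ! 0)"])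
      (auto intro: computable_nary_nth computable_nary_Suc)
  then have "computable_nary 2 (\<lambda>xs. xs ! 0 + xs ! 1)" by (simp add: numeral_2_eq_2)
  from computable_nary_compose2[OF this assms] show ?thesis .
qed

lemma computable_nary_mult:
  assumes "computable_nary k a" "computable_nary k b"
  shows "computable_nary k (\<lambda>xs. a xs * b xs)"
proof -
  have "prim_rec (\<lambda>ys. 0) (\<lambda>ys. ys ! 0 + ys ! 2) n ys = n * ys ! 0" for n ys
    by (induction n) auto
  then have "computable_nary (Suc 1) (\<lambda>xs. xs ! 0 * xs ! 1)"
    by (intro computable_nary_prim_rec[of 1 "\<lambda>ys. 0" "\<lambda>ys. ys ! 0 + ys ! 2"])
      (auto intro!: computable_nary_const computable_nary_add computable_nary_nth)
  then have "computable_nary 2 (\<lambda>xs. xs ! 0 * xs ! 1)" by (simp add: numeral_2_eq_2)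
  from computable_nary_compose2[OF this assms] show ?thesis .
qed

lemma computable_nary_diff:
  assumes "computable_nary k a" "computable_nary k b"
  shows "computable_nary k (\<lambda>xs. a xs - b xs)"
proof -
  have "prim_rec (\<lambda>ys. 0) (\<lambda>ys. ys ! 1) n ys = n - 1" for n ys
    by (induction n) auto
  then have "computable_nary (Suc 0) (\<lambda>xs. xs ! 0 - 1)"
    by (intro computable_nary_prim_rec[of 0 "\<lambda>ys. 0" "\<lambda>ys. ys ! 1"])
      (auto intro: computable_nary_const computable_nary_nth)
  then have pred: "computable_nary 1 (\<lambda>xs. xs ! 0 - 1)" by simp
  have "prim_rec (\<lambda>ys. ys ! 0) (\<lambda>ys. ys ! 0 - 1) n ys = ys ! 0 - n" for n ys
    by (induction n) auto
  then have "computable_nary (Suc 1) (\<lambda>xs. xs ! 1 - xs ! 0)"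
    by (intro computable_nary_prim_rec[of 1 "\<lambda>ys. ys ! 0" "\<lambda>ys. ys ! 0 - 1"])
      (rule computable_nary_nth computable_nary_compose1[OF pred] | simp)+
  then have "computable_nary 2 (\<lambda>xs. xs ! 1 - xs ! 0)" by (simp add: numeral_2_eq_2)
  from computable_nary_compose2[OF this assms(2,1)] show ?thesis .
qed

lemma computable_nary_triangle:
  assumes "computable_nary k a"
  shows "computable_nary k (\<lambda>xs. triangle (a xs))"
proof -
  have "prim_rec (\<lambda>ys. 0) (\<lambda>ys. ys ! 0 + Suc (ys ! 1)) n ys = triangle n" for n ys
    by (induction n) auto
  then have "computable_nary (Suc 0) (\<lambda>xs. triangle (xs ! 0))"
    by (intro computable_nary_prim_rec[of 0 "\<lambda>ys. 0" "\<lambda>ys. ys ! 0 + Suc (ys ! 1)"])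
      (auto intro!: computable_nary_const computable_nary_add computable_nary_Suc computable_nary_nth)
  then have "computable_nary 1 (\<lambda>xs. triangle (xs ! 0))" by simp
  from computable_nary_compose1[OF this assms] show ?thesis .
qed

lemma computable_nary_prod_encode:
  "computable_nary k a \<Longrightarrow> computable_nary k b \<Longrightarrow> computable_nary k (\<lambda>xs. prod_encode (a xs, b xs))"
  unfolding prod_encode_def by (auto intro!: computable_nary_add computable_nary_triangle)

lemma if_eq_nat_arith:
  "(if (x::nat) = y then u else v) = u * (1 - ((x - y) + (y - x))) + v * (1 - (1 - ((x - y) + (y - x))))"
  by auto

lemma computable_nary_if_eq:
  "computable_nary k c \<Longrightarrow> computable_nary k d \<Longrightarrow> computable_nary k a \<Longrightarrow> computable_nary k b \<Longrightarrow>
   computable_nary k (\<lambda>xs. if c xs = d xs then a xs else b xs)"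
  unfolding if_eq_nat_arith
  by (intro computable_nary_add computable_nary_mult computable_nary_diff computable_nary_const)

text \<open>The diagonal of the Cantor pairing containing \<open>z\<close>, found by unbounded search.\<close>

definition cantor_diagonal :: "nat \<Rightarrow> nat" where
  "cantor_diagonal z = (LEAST s. Suc z - triangle (Suc s) = 0)"

lemma le_triangle: "n \<le> triangle n"
  by (induction n) auto

lemma cantor_diagonal_bounds:
  "triangle (cantor_diagonal z) \<le> z \<and> z < triangle (Suc (cantor_diagonal z))"
proof -
  have "Suc z - triangle (Suc z) = 0" using le_triangle[of "Suc z"] by simp
  then have upper: "Suc z - triangle (Suc (cantor_diagonal z)) = 0"
    unfolding cantor_diagonal_def by (rule LeastI)
  have "triangle (cantor_diagonal z) \<le> z"
  proof (cases "cantor_diagonal z")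
    case (Suc m)
    then have "m < cantor_diagonal z" by simp
    then have "Suc z - triangle (Suc m) \<noteq> 0"
      unfolding cantor_diagonal_def by (rule not_less_Least)
    then show ?thesis using Suc by simp
  qed simp
  then show ?thesis using upper by simp
qed

lemma prod_decode_eq_cantor_diagonal:
  "prod_decode z = (z - triangle (cantor_diagonal z), cantor_diagonal z - (z - triangle (cantor_diagonal z)))"
proof -
  let ?d = "cantor_diagonal z"
  have "triangle ?d \<le> z" "z - triangle ?d \<le> ?d" using cantor_diagonal_bounds[of z] by auto
  then have "prod_encode (z - triangle ?d, ?d - (z - triangle ?d)) = z"
    unfolding prod_encode_def by simp
  then show ?thesis by (metis prod_encode_inverse)
qed

lemma computable_nary_cantor_diagonal:
  assumes "computable_nary k a"
  shows "computable_nary k (\<lambda>xs. cantor_diagonal (a xs))"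
proof -
  let ?f = "\<lambda>ys. Suc (ys ! 1) - triangle (Suc (ys ! 0))"
  have "computable_nary 1 (\<lambda>xs. LEAST s. ?f (s # xs) = 0)"
  proof (rule computable_nary_Least)
    show "computable_nary (Suc 1) ?f"
      by (intro computable_nary_diff computable_nary_Suc computable_nary_triangle computable_nary_nth) auto
    show "\<exists>n. ?f (n # xs) = 0" for xs :: "nat list"
      using le_triangle[of "Suc (xs ! 0)"] by (intro exI[of _ "xs ! 0"]) simp
  qed
  then have "computable_nary 1 (\<lambda>xs. cantor_diagonal (xs ! 0))"
    by (rule computable_nary_cong) (simp add: cantor_diagonal_def)
  from computable_nary_compose1[OF this assms] show ?thesis .
qed

lemma computable_nary_fst_prod_decode:
  "computable_nary k a \<Longrightarrow> computable_nary k (\<lambda>xs. fst (prod_decode (a xs)))"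
  unfolding prod_decode_eq_cantor_diagonal fst_conv
  by (intro computable_nary_diff computable_nary_triangle computable_nary_cantor_diagonal)

lemma computable_nary_snd_prod_decode:
  "computable_nary k a \<Longrightarrow> computable_nary k (\<lambda>xs. snd (prod_decode (a xs)))"
  unfolding prod_decode_eq_cantor_diagonal snd_conv
  by (intro computable_nary_diff computable_nary_triangle computable_nary_cantor_diagonal)

subsection \<open>Course-of-values recursion\<close>

text \<open>
  \<open>history F n\<close> encodes the list \<open>[F (n - 1), \<dots>, F 0]\<close>; \<open>history_lookup h d\<close> drops \<open>d\<close> entries
  and returns the head.
\<close>

fun history :: "(nat \<Rightarrow> nat) \<Rightarrow> nat \<Rightarrow> nat" where
  "history F 0 = 0"
| "history F (Suc n) = Suc (prod_encode (F n, history F n))"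

definition history_lookup :: "nat \<Rightarrow> nat \<Rightarrow> nat" where
  "history_lookup h d = fst (prod_decode (((\<lambda>h. snd (prod_decode (h - 1))) ^^ d) h - 1))"

lemma history_lookup_history: "k < n \<Longrightarrow> history_lookup (history F n) (n - Suc k) = F k"
proof (induction n)
  case (Suc n)
  show ?case
  proof (cases "k = n")
    case False
    then have "k < n" "Suc n - Suc k = Suc (n - Suc k)" using Suc.prems by auto
    then show ?thesis
      using Suc.IH unfolding history_lookup_def by (simp only: funpow_Suc_right o_def) simp
  qed (simp add: history_lookup_def)
qed simp

lemma computable_nary_history_lookup:
  "computable_nary k a \<Longrightarrow> computable_nary k b \<Longrightarrow> computable_nary k (\<lambda>xs. history_lookup (a xs) (b xs))"
proof -
  let ?tail = "\<lambda>h. snd (prod_decode (h - 1))"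
  have "prim_rec (\<lambda>ys. ys ! 0) (\<lambda>ys. ?tail (ys ! 0)) d ys = (?tail ^^ d) (ys ! 0)" for d ys
    by (induction d) auto
  then have "computable_nary (Suc 1) (\<lambda>zs. (?tail ^^ (zs ! 0)) (zs ! 1))"
    by (intro computable_nary_prim_rec[of 1 "\<lambda>ys. ys ! 0" "\<lambda>ys. ?tail (ys ! 0)"])
      (auto intro!: computable_nary_nth computable_nary_snd_prod_decode computable_nary_diff
        computable_nary_const)
  then have "computable_nary 2 (\<lambda>xs. history_lookup (xs ! 1) (xs ! 0))"
    unfolding history_lookup_def
    by (intro computable_nary_fst_prod_decode computable_nary_diff computable_nary_const)
      (simp add: numeral_2_eq_2)
  then show "computable_nary k a \<Longrightarrow> computable_nary k b \<Longrightarrow> ?thesis"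
    using computable_nary_compose2[of "\<lambda>x y. history_lookup y x" k b a] by simp
qed

lemma computable_nary_course_of_values:
  assumes H: "computable_nary 2 (\<lambda>xs. H (xs ! 0) (xs ! 1))" and F: "\<And>n. F n = H n (history F n)"
  shows "computable_nary 1 (\<lambda>xs. F (xs ! 0))"
proof -
  have "prim_rec (\<lambda>_. 0) (\<lambda>ys. Suc (prod_encode (H (ys ! 1) (ys ! 0), ys ! 0))) n ys = history F n"
    for n ys
    by (induction n) (auto simp: F[symmetric])
  then have "computable_nary (Suc 0) (\<lambda>zs. history F (zs ! 0))"
    by (intro computable_nary_prim_rec[of 0 "\<lambda>_. 0" "\<lambda>ys. Suc (prod_encode (H (ys ! 1) (ys ! 0), ys ! 0))"])
      (auto intro!: computable_nary_const computable_nary_Suc computable_nary_prod_encode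
        computable_nary_compose2[OF H] computable_nary_nth)
  then have "computable_nary 1 (\<lambda>xs. H (xs ! 0) (history F (xs ! 0)))"
    by (intro computable_nary_compose2[OF H]) (auto intro: computable_nary_nth)
  then show ?thesis by (simp add: F[symmetric])
qed

lemmas computable_nary_intros = computable_nary_const computable_nary_prod_encode computable_nary_Suc
  computable_nary_add computable_nary_mult computable_nary_diff computable_nary_fst_prod_decode
  computable_nary_snd_prod_decode computable_nary_if_eq computable_nary_history_lookup


section \<open>Formulas of second-order arithmetic\<close>

lemma sat_cong_fv: "(\<forall>v\<in>fv p. e v = e' v) \<Longrightarrow> sat D I e p = sat D I e' p"
proof (induction p arbitrary: e e')
  case (Rel r xs)
  then have "map e xs = map e' xs" by simp
  then show ?case by (simp only: sat.simps)
next
  case (Ex x p)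
  have "sat D I (e(x := a)) p = sat D I (e'(x := a)) p" for a
    using Ex.prems by (intro Ex.IH) auto
  then show ?case by simp
next
  case (Conj p q)
  then show ?case by (metis Un_iff sat.simps(4) fv.simps(4))
qed auto

definition Forall :: "nat \<Rightarrow> fm \<Rightarrow> fm" where "Forall x p = Neg (Ex x (Neg p))"
definition Imp :: "fm \<Rightarrow> fm \<Rightarrow> fm" where "Imp p q = Neg (Conj p (Neg q))"
definition Disj :: "fm \<Rightarrow> fm \<Rightarrow> fm" where "Disj p q = Neg (Conj (Neg p) (Neg q))"

definition Num_fm :: "nat \<Rightarrow> fm" where "Num_fm a = Rel 0 [a]"
definition Set_fm :: "nat \<Rightarrow> fm" where "Set_fm a = Rel 1 [a]"
definition Mem_fm :: "nat \<Rightarrow> nat \<Rightarrow> fm" where "Mem_fm a b = Rel 2 [a, b]"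
definition Add_fm :: "nat \<Rightarrow> nat \<Rightarrow> nat \<Rightarrow> fm" where "Add_fm a b c = Rel 3 [a, b, c]"
definition Mult_fm :: "nat \<Rightarrow> nat \<Rightarrow> nat \<Rightarrow> fm" where "Mult_fm a b c = Rel 4 [a, b, c]"
definition Zero_fm :: "nat \<Rightarrow> fm" where "Zero_fm a = Add_fm a a a"
definition One_fm :: "nat \<Rightarrow> fm" where "One_fm a = Conj (Mult_fm a a a) (Neg (Add_fm a a a))"

lemmas fm_abbrev_defs = Forall_def Imp_def Disj_def Num_fm_def Set_fm_def Mem_fm_def Add_fm_def
  Mult_fm_def Zero_fm_def One_fm_def

abbreviation sat_N2 :: "(nat \<Rightarrow> nat + nat set) \<Rightarrow> fm \<Rightarrow> bool" where
  "sat_N2 \<equiv> sat UNIV n2_rel"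

lemma sat_Forall [simp]: "sat D I e (Forall x p) \<longleftrightarrow> (\<forall>a\<in>D. sat D I (e(x := a)) p)"
  by (simp add: Forall_def)
lemma sat_Imp [simp]: "sat D I e (Imp p q) \<longleftrightarrow> (sat D I e p \<longrightarrow> sat D I e q)"
  by (simp add: Imp_def)
lemma sat_Disj [simp]: "sat D I e (Disj p q) \<longleftrightarrow> (sat D I e p \<or> sat D I e q)"
  by (simp add: Disj_def)
lemma sat_Num_fm [simp]: "sat_N2 e (Num_fm a) \<longleftrightarrow> (\<exists>x. e a = Inl x)"
  by (auto simp: Num_fm_def n2_rel_def)
lemma sat_Set_fm [simp]: "sat_N2 e (Set_fm a) \<longleftrightarrow> (\<exists>A. e a = Inr A)"
  by (auto simp: Set_fm_def n2_rel_def)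
lemma sat_Mem_fm [simp]: "sat_N2 e (Mem_fm a b) \<longleftrightarrow> (\<exists>x A. e a = Inl x \<and> e b = Inr A \<and> x \<in> A)"
  by (auto simp: Mem_fm_def n2_rel_def)
lemma sat_Add_fm [simp]:
  "sat_N2 e (Add_fm a b c) \<longleftrightarrow> (\<exists>x y. e a = Inl x \<and> e b = Inl y \<and> e c = Inl (x + y))"
  by (auto simp: Add_fm_def n2_rel_def)
lemma sat_Mult_fm [simp]:
  "sat_N2 e (Mult_fm a b c) \<longleftrightarrow> (\<exists>x y. e a = Inl x \<and> e b = Inl y \<and> e c = Inl (x * y))"
  by (auto simp: Mult_fm_def n2_rel_def)
lemma sat_Zero_fm [simp]: "sat_N2 e (Zero_fm a) \<longleftrightarrow> e a = Inl 0"
  unfolding Zero_fm_def sat_Add_fm by (cases "e a") auto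
lemma sat_One_fm [simp]: "sat_N2 e (One_fm a) \<longleftrightarrow> e a = Inl 1"
proof (cases "e a")
  case (Inl x)
  have "x * x = x \<longleftrightarrow> x = 0 \<or> x = 1" using mult_cancel1[of x x 1] by auto
  then show ?thesis using Inl unfolding One_fm_def by auto
qed (simp add: One_fm_def)

text \<open>
  \<open>Pair_fm z a b\<close> says \<open>2z = (a + b)(a + b + 1) + 2a\<close>, i.e. \<open>z = \<langle>a, b\<rangle>\<close>. It binds the
  variables 21--26, which its arguments must avoid.
\<close>

definition Pair_fm :: "nat \<Rightarrow> nat \<Rightarrow> nat \<Rightarrow> fm" where
  "Pair_fm z a b = Ex 21 (Conj (Add_fm a b 21) (Ex 23 (Conj (One_fm 23) (Ex 22 (Conj (Add_fm 21 23 22)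
     (Ex 24 (Conj (Mult_fm 21 22 24) (Ex 25 (Conj (Add_fm z z 25)
     (Ex 26 (Conj (Add_fm 24 a 26) (Add_fm 26 a 25))))))))))))"

lemma double_prod_encode_iff:
  "z + z = (x + y) * (x + y + 1) + x + x \<longleftrightarrow> z = prod_encode (x, y)"
proof -
  have "(x + y) * (x + y + 1) = 2 * triangle (x + y)"
    unfolding triangle_def by simp
  then show ?thesis unfolding prod_encode_def by auto
qed

lemma sat_Pair_fm:
  assumes "z \<notin> {21..26}" "a \<notin> {21..26}" "b \<notin> {21..26}"
  shows "sat_N2 e (Pair_fm z a b) \<longleftrightarrow> (\<exists>x y. e a = Inl x \<and> e b = Inl y \<and> e z = Inl (prod_encode (x, y)))"
proof -
  have "z \<noteq> 21" "z \<noteq> 22" "z \<noteq> 23" "z \<noteq> 24" "z \<noteq> 25" "z \<noteq> 26"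
    "a \<noteq> 21" "a \<noteq> 22" "a \<noteq> 23" "a \<noteq> 24" "a \<noteq> 25" "a \<noteq> 26"
    "b \<noteq> 21" "b \<noteq> 22" "b \<noteq> 23" "b \<noteq> 24" "b \<noteq> 25" "b \<noteq> 26" using assms by auto
  then have "sat_N2 e (Pair_fm z a b) \<longleftrightarrow>
      (\<exists>x y w. e a = Inl x \<and> e b = Inl y \<and> e z = Inl w \<and> w + w = (x + y) * (x + y + 1) + x + x)"
    unfolding Pair_fm_def by (simp add: split_sum_ex) auto
  then show ?thesis by (simp only: double_prod_encode_iff) blast
qed

lemma fv_Pair_fm: "z \<notin> {21..26} \<Longrightarrow> a \<notin> {21..26} \<Longrightarrow> b \<notin> {21..26} \<Longrightarrow> fv (Pair_fm z a b) = {z, a, b}"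
  by (auto simp: Pair_fm_def fm_abbrev_defs)

lemma wf_Pair_fm: "wf_fm n2_sig (Pair_fm z a b)"
  by (simp add: Pair_fm_def fm_abbrev_defs n2_sig_def)

text \<open>
  \<open>m \<in> D\<^sub>k\<close> iff bit \<open>m\<close> of \<open>k\<close> is set, so the pairs \<open>\<langle>m, k\<rangle>\<close> with \<open>m \<in> D\<^sub>k\<close> form the least set
  containing every \<open>\<langle>0, 2q + 1\<rangle>\<close> and closed under \<open>\<langle>m, q\<rangle> \<mapsto> \<langle>m + 1, 2q\<rangle>, \<langle>m + 1, 2q + 1\<rangle>\<close>.
  This least set is defined in N_2 by quantifying over all closed sets.
\<close>

definition bit_closed :: "nat set \<Rightarrow> bool" where
  "bit_closed A \<longleftrightarrow> (\<forall>q. prod_encode (0, Suc (q + q)) \<in> A) \<and>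
     (\<forall>m q. prod_encode (m, q) \<in> A \<longrightarrow> prod_encode (Suc m, q + q) \<in> A \<and> prod_encode (Suc m, Suc (q + q)) \<in> A)"

lemma bit_closed_set_decode: "bit_closed {prod_encode (m, k) | m k. m \<in> set_decode k}"
proof -
  have "(q + q) div 2 = q" "Suc (q + q) div 2 = q" "odd (Suc (q + q))" for q :: nat by presburger+
  then show ?thesis unfolding bit_closed_def by auto
qed

lemma bit_closed_memI: "bit_closed A \<Longrightarrow> m \<in> set_decode k \<Longrightarrow> prod_encode (m, k) \<in> A"
proof (induction m arbitrary: k)
  case 0
  then obtain q where "k = Suc (q + q)" by (metis oddE set_decode_0 mult_2 Suc_eq_plus1)
  then show ?case using 0 unfolding bit_closed_def by simp
next
  case (Suc m)
  then have "prod_encode (m, k div 2) \<in> A" by simp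
  moreover have "k = k div 2 + k div 2 \<or> k = Suc (k div 2 + k div 2)" by presburger
  ultimately show ?case using Suc.prems(1) unfolding bit_closed_def by metis
qed

definition Bit_base_fm :: "nat \<Rightarrow> fm" where
  "Bit_base_fm S = Forall 43 (Forall 44 (Forall 45 (Forall 46 (Imp (Conj (Zero_fm 43) (Conj (One_fm 44)
      (Ex 47 (Conj (Add_fm 45 45 47) (Add_fm 47 44 46))))) (Ex 48 (Conj (Pair_fm 48 43 46) (Mem_fm 48 S)))))))"

definition Bit_step_fm :: "nat \<Rightarrow> fm" where
  "Bit_step_fm S = Forall 49 (Forall 50 (Forall 51 (Forall 44 (Imp (Conj (One_fm 44) (Conj (Disj (Add_fm 51 51 50)
      (Ex 47 (Conj (Add_fm 51 51 47) (Add_fm 47 44 50)))) (Ex 48 (Conj (Pair_fm 48 49 51) (Mem_fm 48 S)))))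
      (Ex 48 (Ex 52 (Conj (Add_fm 49 44 52) (Conj (Pair_fm 48 52 50) (Mem_fm 48 S)))))))))"

definition Bit_closed_fm :: "nat \<Rightarrow> fm" where
  "Bit_closed_fm S = Conj (Set_fm S) (Conj (Bit_base_fm S) (Bit_step_fm S))"

lemma sat_Bit_base_fm:
  assumes "S \<notin> {21..26}" "S \<notin> {43..48}" "e S = Inr A"
  shows "sat_N2 e (Bit_base_fm S) \<longleftrightarrow> (\<forall>q. prod_encode (0, Suc (q + q)) \<in> A)"
proof -
  have "S \<noteq> 43" "S \<noteq> 44" "S \<noteq> 45" "S \<noteq> 46" "S \<noteq> 47" "S \<noteq> 48" using assms by auto
  then show ?thesis
    unfolding Bit_base_fm_def using assms(3) by (simp add: sat_Pair_fm split_sum_ex split_sum_all)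
qed

lemma sat_Bit_step_fm:
  assumes "S \<notin> {21..26}" "S \<notin> {44..52}" "e S = Inr A"
  shows "sat_N2 e (Bit_step_fm S) \<longleftrightarrow> (\<forall>m q. prod_encode (m, q) \<in> A \<longrightarrow>
    prod_encode (Suc m, q + q) \<in> A \<and> prod_encode (Suc m, Suc (q + q)) \<in> A)"
proof -
  have "S \<noteq> 44" "S \<noteq> 47" "S \<noteq> 48" "S \<noteq> 49" "S \<noteq> 50" "S \<noteq> 51" "S \<noteq> 52" using assms by auto
  then show ?thesis
    unfolding Bit_step_fm_def using assms(3) by (simp add: sat_Pair_fm split_sum_ex split_sum_all) auto
qed

lemma sat_Bit_closed_fm:
  assumes "S \<notin> {21..26}" "S \<notin> {43..52}"
  shows "sat_N2 e (Bit_closed_fm S) \<longleftrightarrow> (\<exists>A. e S = Inr A \<and> bit_closed A)"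
proof (cases "e S")
  case (Inr A)
  have "S \<notin> {44..52}" "S \<notin> {43..48}" using assms by auto
  then show ?thesis
    unfolding Bit_closed_fm_def bit_closed_def using Inr assms sat_Bit_base_fm sat_Bit_step_fm by simp
qed (simp add: Bit_closed_fm_def)

definition In_decode_fm :: "nat \<Rightarrow> nat \<Rightarrow> fm" where
  "In_decode_fm m k = Forall 41 (Imp (Bit_closed_fm 41) (Ex 42 (Conj (Pair_fm 42 m k) (Mem_fm 42 41))))"

lemma sat_In_decode_fm:
  assumes "m \<notin> {21..26}" "m \<notin> {41..52}" "k \<notin> {21..26}" "k \<notin> {41..52}"
  shows "sat_N2 e (In_decode_fm m k) \<longleftrightarrow> (\<exists>x y. e m = Inl x \<and> e k = Inl y \<and> x \<in> set_decode y)"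
proof -
  have "m \<noteq> 41" "m \<noteq> 42" "k \<noteq> 41" "k \<noteq> 42" using assms by auto
  then have "sat_N2 e (In_decode_fm m k) \<longleftrightarrow>
      (\<forall>A. bit_closed A \<longrightarrow> (\<exists>x y. e m = Inl x \<and> e k = Inl y \<and> prod_encode (x, y) \<in> A))"
    unfolding In_decode_fm_def using assms
    by (simp add: split_sum_ex split_sum_all sat_Bit_closed_fm sat_Pair_fm) blast
  also have "\<dots> \<longleftrightarrow> (\<exists>x y. e m = Inl x \<and> e k = Inl y \<and> x \<in> set_decode y)"
  proof
    assume "\<forall>A. bit_closed A \<longrightarrow> (\<exists>x y. e m = Inl x \<and> e k = Inl y \<and> prod_encode (x, y) \<in> A)"
    from this[rule_format, OF bit_closed_set_decode]
    show "\<exists>x y. e m = Inl x \<and> e k = Inl y \<and> x \<in> set_decode y" by auto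
  qed (use bit_closed_memI in blast)
  finally show ?thesis .
qed

lemma fv_Bit_closed_fm: "S \<notin> {21..26} \<Longrightarrow> S \<notin> {43..52} \<Longrightarrow> fv (Bit_closed_fm S) = {S}"
  by (auto simp: Bit_closed_fm_def Bit_base_fm_def Bit_step_fm_def fm_abbrev_defs fv_Pair_fm)

lemma fv_In_decode_fm:
  "m \<notin> {21..26} \<Longrightarrow> m \<notin> {41..52} \<Longrightarrow> k \<notin> {21..26} \<Longrightarrow> k \<notin> {41..52} \<Longrightarrow>
   fv (In_decode_fm m k) = {m, k}"
  by (auto simp: In_decode_fm_def fm_abbrev_defs fv_Pair_fm fv_Bit_closed_fm)

definition Pair_instance_fm :: "fm \<Rightarrow> nat \<Rightarrow> nat \<Rightarrow> fm" where
  "Pair_instance_fm p0 i k = Ex 0 (Conj (Pair_fm 0 i k) p0)"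

lemma sat_Pair_instance_fm:
  assumes "fv p0 \<subseteq> {0}" "i \<notin> {21..26}" "k \<notin> {21..26}" "i \<noteq> 0" "k \<noteq> 0"
  shows "sat_N2 e (Pair_instance_fm p0 i k) \<longleftrightarrow>
    (\<exists>x y. e i = Inl x \<and> e k = Inl y \<and> sat_N2 (\<lambda>_. Inl (prod_encode (x, y))) p0)"
proof -
  have "sat_N2 (e(0 := v)) p0 = sat_N2 (\<lambda>_. v) p0" for v
    using assms(1) by (intro sat_cong_fv) auto
  then show ?thesis unfolding Pair_instance_fm_def using assms by (simp add: sat_Pair_fm) blast
qed

text \<open>
  With \<open>p\<^sub>0\<close> defining the relation \<open>\<kappa> i \<subseteq> \<Union> (\<beta> ` D\<^sub>k)\<close> and \<open>x, y\<close> ranging over index sets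
  \<open>I, J\<close>, this says: every \<open>\<kappa> i\<close> covered by a single \<open>\<beta> n\<close> with \<open>n \<in> I\<close> is covered by \<open>\<beta> ` D\<^sub>k\<close>
  for some \<open>D\<^sub>k \<subseteq> J\<close>. The bound variables are odd, so even variables may be substituted.
\<close>

definition Subset_fm :: "fm \<Rightarrow> nat \<Rightarrow> nat \<Rightarrow> fm" where
  "Subset_fm p0 x y = Forall 1 (Imp (Mem_fm 1 x) (Forall 3 (Imp (Num_fm 3)
     (Imp (Ex 5 (Conj (Num_fm 5) (Conj (Forall 7 (Imp (In_decode_fm 7 5) (Eq 7 1))) (Pair_instance_fm p0 3 5))))
          (Ex 5 (Conj (Num_fm 5) (Conj (Forall 7 (Imp (In_decode_fm 7 5) (Mem_fm 7 y))) (Pair_instance_fm p0 3 5))))))))"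

lemma sat_Subset_fm:
  assumes p0: "fv p0 \<subseteq> {0}" and xy: "x \<notin> {1,3,5,7}" "y \<notin> {1,3,5,7}"
    and I: "e x = Inr I" and J: "e y = Inr J"
  shows "sat_N2 e (Subset_fm p0 x y) \<longleftrightarrow> (\<forall>n\<in>I. \<forall>i.
      (\<exists>k. set_decode k \<subseteq> {n} \<and> sat_N2 (\<lambda>_. Inl (prod_encode (i, k))) p0) \<longrightarrow>
      (\<exists>k. set_decode k \<subseteq> J \<and> sat_N2 (\<lambda>_. Inl (prod_encode (i, k))) p0))"
proof -
  have ne: "x \<noteq> 1" "x \<noteq> 3" "x \<noteq> 5" "x \<noteq> 7" "y \<noteq> 1" "y \<noteq> 3" "y \<noteq> 5" "y \<noteq> 7"
    "x \<noteq> Suc 0" "y \<noteq> Suc 0" using xy by auto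
  have pair_instance: "sat_N2 e' (Pair_instance_fm p0 3 5) \<longleftrightarrow>
      (\<exists>a b. e' 3 = Inl a \<and> e' 5 = Inl b \<and> sat_N2 (\<lambda>_. Inl (prod_encode (a, b))) p0)" for e'
    using p0 by (intro sat_Pair_instance_fm) auto
  have decode: "sat_N2 e' (In_decode_fm 7 5) \<longleftrightarrow>
      (\<exists>a b. e' 7 = Inl a \<and> e' 5 = Inl b \<and> a \<in> set_decode b)" for e'
    by (intro sat_In_decode_fm) auto
  show ?thesis
    unfolding Subset_fm_def using I J
    by (simp add: ne split_sum_ex split_sum_all pair_instance decode subset_iff Ball_def)
qed

lemma fv_Subset_fm: "fv p0 \<subseteq> {0} \<Longrightarrow> x \<notin> {1,3,5,7} \<Longrightarrow> y \<notin> {1,3,5,7} \<Longrightarrow> fv (Subset_fm p0 x y) = {x, y}"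
  by (auto simp: Subset_fm_def Pair_instance_fm_def fm_abbrev_defs fv_In_decode_fm fv_Pair_fm)

lemma wf_Subset_fm: "wf_fm n2_sig p0 \<Longrightarrow> wf_fm n2_sig (Subset_fm p0 x y)"
  by (simp add: Subset_fm_def fm_abbrev_defs n2_sig_def In_decode_fm_def Bit_closed_fm_def
      Bit_base_fm_def Bit_step_fm_def Pair_instance_fm_def wf_Pair_fm)

lemma Union_basis_subset_iff_compact_covers:
  assumes open_\<beta>: "\<And>n. openin X (\<beta> n)" and compact_\<kappa>: "\<And>i. compactin X (\<kappa> i)"
    and \<beta>_Union_\<kappa>: "\<And>n. \<exists>I. \<beta> n = \<Union> (\<kappa> ` I)"
  shows "\<Union> (\<beta> ` I) \<subseteq> \<Union> (\<beta> ` J) \<longleftrightarrow> (\<forall>n\<in>I. \<forall>i.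
      (\<exists>k. set_decode k \<subseteq> {n} \<and> \<kappa> i \<subseteq> \<Union> (\<beta> ` set_decode k)) \<longrightarrow>
      (\<exists>k. set_decode k \<subseteq> J \<and> \<kappa> i \<subseteq> \<Union> (\<beta> ` set_decode k)))" (is "_ \<longleftrightarrow> ?covers")
proof
  assume sub: "\<Union> (\<beta> ` I) \<subseteq> \<Union> (\<beta> ` J)"
  show ?covers
  proof (intro ballI allI impI)
    fix n i assume "n \<in> I" "\<exists>k. set_decode k \<subseteq> {n} \<and> \<kappa> i \<subseteq> \<Union> (\<beta> ` set_decode k)"
    then have "\<kappa> i \<subseteq> \<Union> (\<beta> ` J)" using sub by blast
    then obtain F where F: "finite F" "F \<subseteq> \<beta> ` J" "\<kappa> i \<subseteq> \<Union> F"
      using compact_\<kappa>[of i] open_\<beta> unfolding compactin_def by (metis (no_types, lifting) image_iff)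
    then obtain J' where "J' \<subseteq> J" "finite J'" "F = \<beta> ` J'" by (metis finite_subset_image)
    then show "\<exists>k. set_decode k \<subseteq> J \<and> \<kappa> i \<subseteq> \<Union> (\<beta> ` set_decode k)"
      using F(3) by (intro exI[of _ "set_encode J'"]) simp
  qed
next
  assume covers: ?covers
  show "\<Union> (\<beta> ` I) \<subseteq> \<Union> (\<beta> ` J)"
  proof
    fix x assume "x \<in> \<Union> (\<beta> ` I)"
    then obtain n where n: "n \<in> I" "x \<in> \<beta> n" by auto
    obtain I' where "\<beta> n = \<Union> (\<kappa> ` I')" using \<beta>_Union_\<kappa> by blast
    then obtain i where i: "x \<in> \<kappa> i" "\<kappa> i \<subseteq> \<beta> n" using n(2) by auto
    moreover have "set_decode (set_encode {n}) = {n}" by (rule set_encode_inverse) simp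
    ultimately have "set_decode (set_encode {n}) \<subseteq> {n} \<and> \<kappa> i \<subseteq> \<Union> (\<beta> ` set_decode (set_encode {n}))"
      by simp
    then obtain k where "set_decode k \<subseteq> J" "\<kappa> i \<subseteq> \<Union> (\<beta> ` set_decode k)" using covers n(1) by blast
    then show "x \<in> \<Union> (\<beta> ` J)" using i(1) by blast
  qed
qed


section \<open>Translating lattice formulas into second-order arithmetic\<close>

text \<open>
  The lattice variable \<open>x\<close> becomes the set variable \<open>2x\<close>, standing for the index set \<open>I\<close> of the
  open set \<open>\<Union> (\<beta> ` I)\<close>; equality is mutual inclusion since distinct index sets may name the same
  open set. Ill-formed lattice atoms go to \<open>Rel 7 []\<close>, which is ill-formed in N_2 as well.
\<close>

fun translate :: "fm \<Rightarrow> fm \<Rightarrow> fm" where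
  "translate p0 (Eq i j) = Conj (Subset_fm p0 (2 * i) (2 * j)) (Subset_fm p0 (2 * j) (2 * i))"
| "translate p0 (Rel r xs) =
    (if r = 0 \<and> length xs = 2 then Subset_fm p0 (2 * (xs ! 0)) (2 * (xs ! 1)) else Rel 7 [])"
| "translate p0 (Neg p) = Neg (translate p0 p)"
| "translate p0 (Conj p q) = Conj (translate p0 p) (translate p0 q)"
| "translate p0 (Ex x p) = Ex (2 * x) (Conj (Set_fm (2 * x)) (translate p0 p))"

lemma double_notin_odd: "(2::nat) * i \<notin> {1,3,5,7}"
  by (auto; presburger)

lemma wf_lat_sig_RelE:
  assumes "wf_fm lat_sig (Rel r xs)"
  obtains a b where "r = 0" "xs = [a, b]"
proof -
  have "r = 0" "length xs = 2" using assms by (auto simp: lat_sig_def split: if_splits)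
  then show thesis using that by (metis One_nat_def Suc_1 length_0_conv length_Suc_conv)
qed

lemma fv_Subset_fm_double: "fv p0 \<subseteq> {0} \<Longrightarrow> fv (Subset_fm p0 (2 * i) (2 * j)) = {2 * i, 2 * j}"
  by (rule fv_Subset_fm) (auto simp only: double_notin_odd)

lemma wf_fv_translate:
  assumes "wf_fm n2_sig p0" "fv p0 \<subseteq> {0}" "wf_fm lat_sig p"
  shows "wf_fm n2_sig (translate p0 p) \<and> fv (translate p0 p) = (\<lambda>v. 2 * v) ` fv p"
  using assms(3)
proof (induction p)
  case (Rel r xs)
  then obtain a b where "r = 0" "xs = [a, b]" by (rule wf_lat_sig_RelE)
  then show ?case using assms by (simp add: wf_Subset_fm fv_Subset_fm_double)
next
  case (Ex x p)
  then show ?case by (auto simp: Set_fm_def n2_sig_def)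
qed (use assms in \<open>auto simp: wf_Subset_fm fv_Subset_fm_double\<close>)

lemma not_wf_translate: "\<not> wf_fm lat_sig p \<Longrightarrow> \<not> wf_fm n2_sig (translate p0 p)"
  by (induction p) (auto simp: lat_sig_def n2_sig_def Set_fm_def split: if_splits)

lemma sentence_translate_iff:
  assumes "wf_fm n2_sig p0" "fv p0 \<subseteq> {0}"
  shows "sentence n2_sig (translate p0 p) \<longleftrightarrow> sentence lat_sig p"
  using wf_fv_translate[OF assms] not_wf_translate unfolding sentence_def by blast

locale covering_formula =
  fixes X :: "'a topology" and \<beta> \<kappa> :: "nat \<Rightarrow> 'a set" and p0 :: fm
  assumes AnLCS: "AnLCS X \<beta> \<kappa>"
    and wf_p0: "wf_fm n2_sig p0" and fv_p0: "fv p0 \<subseteq> {0}"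
    and sat_p0: "\<And>i k. sat_N2 (\<lambda>_. Inl (prod_encode (i, k))) p0 \<longleftrightarrow> \<kappa> i \<subseteq> \<Union> (\<beta> ` set_decode k)"
begin

lemma open_\<beta>: "openin X (\<beta> n)"
  using AnLCS unfolding AnLCS_def by blast

lemma open_eq_Union_\<beta>: "openin X U \<Longrightarrow> \<exists>I. U = \<Union> (\<beta> ` I)"
  using AnLCS unfolding AnLCS_def by blast

lemma sat_Subset_fm_iff:
  assumes "e (2 * a) = Inr I" "e (2 * b) = Inr J"
  shows "sat_N2 e (Subset_fm p0 (2 * a) (2 * b)) \<longleftrightarrow> \<Union> (\<beta> ` I) \<subseteq> \<Union> (\<beta> ` J)"
proof -
  have "\<And>i. compactin X (\<kappa> i)" "\<And>n. \<exists>I. \<beta> n = \<Union> (\<kappa> ` I)"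
    using AnLCS unfolding AnLCS_def by blast+
  note covers = Union_basis_subset_iff_compact_covers[OF open_\<beta> this]
  show ?thesis
    unfolding sat_Subset_fm[OF fv_p0 double_notin_odd double_notin_odd assms] sat_p0 covers ..
qed

abbreviation sat_lattice :: "(nat \<Rightarrow> 'a set) \<Rightarrow> fm \<Rightarrow> bool" where
  "sat_lattice \<equiv> sat {U. openin X U} lat_rel"

lemma open_Union_\<beta>: "openin X (\<Union> (\<beta> ` I))"
  using open_\<beta> by auto

lemma sat_translate_iff:
  assumes "wf_fm lat_sig p" and "\<forall>v\<in>fv p. \<exists>I. e' (2 * v) = Inr I \<and> e v = \<Union> (\<beta> ` I)"
  shows "sat_lattice e p \<longleftrightarrow> sat_N2 e' (translate p0 p)"
  using assms
proof (induction p arbitrary: e e')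
  case (Eq i j)
  then obtain I J where "e' (2 * i) = Inr I" "e i = \<Union> (\<beta> ` I)" "e' (2 * j) = Inr J" "e j = \<Union> (\<beta> ` J)"
    by auto
  then show ?case by (auto simp: sat_Subset_fm_iff)
next
  case (Rel r xs)
  then obtain a b where ab: "r = 0" "xs = [a, b]" by (blast elim: wf_lat_sig_RelE)
  then obtain I J where "e' (2 * a) = Inr I" "e a = \<Union> (\<beta> ` I)" "e' (2 * b) = Inr J" "e b = \<Union> (\<beta> ` J)"
    using Rel.prems by auto
  then show ?case using ab by (auto simp: sat_Subset_fm_iff lat_rel_def)
next
  case (Conj p q)
  have "sat_lattice e p \<longleftrightarrow> sat_N2 e' (translate p0 p)" using Conj by (intro Conj.IH(1)) auto
  moreover have "sat_lattice e q \<longleftrightarrow> sat_N2 e' (translate p0 q)" using Conj by (intro Conj.IH(2)) auto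
  ultimately show ?case by simp
next
  case (Ex x p)
  have IH: "sat_lattice (e(x := \<Union> (\<beta> ` I))) p \<longleftrightarrow> sat_N2 (e'(2 * x := Inr I)) (translate p0 p)" for I
    using Ex.prems by (intro Ex.IH) auto
  have "sat_lattice e (Ex x p) \<longleftrightarrow> (\<exists>I. sat_lattice (e(x := \<Union> (\<beta> ` I))) p)"
  proof
    assume "sat_lattice e (Ex x p)"
    then obtain U where U: "openin X U" "sat_lattice (e(x := U)) p" by auto
    obtain I where "U = \<Union> (\<beta> ` I)" using open_eq_Union_\<beta>[OF U(1)] by blast
    then show "\<exists>I. sat_lattice (e(x := \<Union> (\<beta> ` I))) p" using U(2) by blast
  qed (use open_Union_\<beta> in auto)
  also have "\<dots> \<longleftrightarrow> sat_N2 e' (translate p0 (Ex x p))"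
    by (simp add: IH split_sum_ex)
  finally show ?case .
qed simp

lemma valid_iff_valid_translate:
  assumes "sentence lat_sig p"
  shows "(\<forall>e. range e \<subseteq> {U. openin X U} \<longrightarrow> sat_lattice e p) \<longleftrightarrow>
         (\<forall>e'. range e' \<subseteq> UNIV \<longrightarrow> sat_N2 e' (translate p0 p))"
proof -
  have "sat_lattice e p \<longleftrightarrow> sat_N2 e' (translate p0 p)" for e e'
    using assms unfolding sentence_def by (intro sat_translate_iff) auto
  moreover have "range (\<lambda>_. {}) \<subseteq> {U. openin X U}" by auto
  ultimately show ?thesis by blast
qed

end


section \<open>Goedel numbers\<close>

abbreviation (input) fst_decode :: "nat \<Rightarrow> nat" where "fst_decode n \<equiv> fst (prod_decode n)"
abbreviation (input) snd_decode :: "nat \<Rightarrow> nat" where "snd_decode n \<equiv> snd (prod_decode n)"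

lemma snd_decode_less:
  assumes "fst_decode n \<noteq> 0"
  shows "snd_decode n < n"
proof -
  obtain x y where n: "n = prod_encode (x, y)" by (metis prod_decode_inverse surj_pair)
  then have "x \<noteq> 0" "snd_decode n = y" using assms by simp_all
  moreover have "y \<le> triangle (x + y)" using le_triangle[of "x + y"] by simp
  ultimately show ?thesis unfolding n prod_encode_def by simp
qed

lemma fst_decode_le: "fst_decode n \<le> n"
  by (metis le_prod_encode_1 prod_decode_inverse prod.collapse)

lemma snd_decode_le: "snd_decode n \<le> n"
  by (metis le_prod_encode_2 prod_decode_inverse prod.collapse)

lemma decode_components_less:
  assumes "fst_decode n \<noteq> 0"
  shows "fst_decode (snd_decode n) < n" "snd_decode (snd_decode n) < n"
  using assms fst_decode_le snd_decode_le snd_decode_less le_less_trans by blast+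

text \<open>Numbers with a tag above 4 decode to \<open>Rel 7 []\<close>, which is ill-formed in both signatures.\<close>

function decode_fm :: "nat \<Rightarrow> fm" where
  "decode_fm n =
    (let t = fst_decode n; r = snd_decode n in
     if t = 0 then Eq (fst_decode r) (snd_decode r)
     else if t = 1 then Rel (fst_decode r) (list_decode (snd_decode r))
     else if t = 2 then Neg (decode_fm r)
     else if t = 3 then Conj (decode_fm (fst_decode r)) (decode_fm (snd_decode r))
     else if t = 4 then Ex (fst_decode r) (decode_fm (snd_decode r))
     else Rel 7 [])"
  by auto
termination
  by (relation "measure id") (simp_all add: snd_decode_less decode_components_less)

declare decode_fm.simps [simp del]

lemma decode_fm_code [simp]: "decode_fm (code p) = p"
  by (induction p) (subst decode_fm.simps, simp)+

lemma code_inject: "code p = code q \<longleftrightarrow> p = q"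
  by (metis decode_fm_code)

lemma code_decode_fm: "wf_fm lat_sig (decode_fm n) \<Longrightarrow> code (decode_fm n) = n"
proof (induction n rule: less_induct)
  case (less n)
  obtain t r where n: "n = prod_encode (t, r)" by (metis prod_decode_inverse surj_pair)
  obtain a b where r: "r = prod_encode (a, b)" by (metis prod_decode_inverse surj_pair)
  have less_n: "r < n" "a < n" "b < n" if "t \<noteq> 0"
    using that snd_decode_less[of n] decode_components_less[of n] n r by simp_all
  have decode_n: "decode_fm n =
     (if t = 0 then Eq a b else if t = 1 then Rel a (list_decode b) else if t = 2 then Neg (decode_fm r)
      else if t = 3 then Conj (decode_fm a) (decode_fm b) else if t = 4 then Ex a (decode_fm b)
      else Rel 7 [])"
    unfolding n r by (subst decode_fm.simps) (simp add: Let_def)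
  consider "t = 0" | "t = 1" | "t = 2" | "t = 3" | "t = 4" | "t > 4" by linarith
  then show ?case
  proof cases
    case 3
    then show ?thesis using less less_n decode_n by (simp add: n)
  next
    case 4
    then show ?thesis using less less_n decode_n by (simp add: n r)
  next
    case 5
    then show ?thesis using less less_n decode_n by (simp add: n r)
  next
    case 6
    then show ?thesis using less.prems decode_n by (simp add: lat_sig_def)
  qed (use decode_n in \<open>simp_all add: n r\<close>)
qed

lemma mem_FO_theory_code_iff:
  "code p \<in> FO_theory sig D I \<longleftrightarrow> sentence sig p \<and> (\<forall>e. range e \<subseteq> D \<longrightarrow> sat D I e p)"
  unfolding FO_theory_def by (auto simp: code_inject)

lemma mem_FO_open_lattice_iff:
  "n \<in> FO_open_lattice X \<longleftrightarrow> sentence lat_sig (decode_fm n) \<and>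
     (\<forall>e. range e \<subseteq> {U. openin X U} \<longrightarrow> sat {U. openin X U} lat_rel e (decode_fm n))"
proof -
  have "n \<in> FO_open_lattice X \<longleftrightarrow> code (decode_fm n) \<in> FO_open_lattice X \<and> sentence lat_sig (decode_fm n)"
    unfolding FO_open_lattice_def FO_theory_def sentence_def by (auto simp: code_decode_fm)
  then show ?thesis unfolding FO_open_lattice_def mem_FO_theory_code_iff by blast
qed

definition translate_code :: "fm \<Rightarrow> nat \<Rightarrow> nat" where
  "translate_code p0 n = code (translate p0 (decode_fm n))"

lemma computable_nary_code_Subset_fm:
  "computable_nary k a \<Longrightarrow> computable_nary k b \<Longrightarrow>
   computable_nary k (\<lambda>xs. code (Subset_fm p0 (a xs) (b xs)))"
  unfolding Subset_fm_def fm_abbrev_defs In_decode_fm_def Bit_closed_fm_def Bit_base_fm_def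
    Bit_step_fm_def Pair_instance_fm_def Pair_fm_def
  by (simp only: code.simps list_encode.simps) (intro computable_nary_intros)

text \<open>
  The code of the translated atom \<open>Rel r (list_decode c)\<close>, read off arithmetically from \<open>c\<close> using
  \<open>list_encode (x # xs) = Suc \<langle>x, list_encode xs\<rangle>\<close>.
\<close>

definition translate_rel_code :: "fm \<Rightarrow> nat \<Rightarrow> nat \<Rightarrow> nat" where
  "translate_rel_code p0 r c =
    (if r = 0 then
       (if c = 0 then code (Rel 7 [])
        else if snd_decode (c - 1) = 0 then code (Rel 7 [])
        else if snd_decode (snd_decode (c - 1) - 1) = 0
        then code (Subset_fm p0 (2 * fst_decode (c - 1)) (2 * fst_decode (snd_decode (c - 1) - 1)))
        else code (Rel 7 []))
     else code (Rel 7 []))"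

lemma translate_rel_code_eq: "translate_rel_code p0 r c = code (translate p0 (Rel r (list_decode c)))"
proof -
  have "translate_rel_code p0 r (list_encode xs) = code (translate p0 (Rel r xs))" for xs
  proof (cases "r = 0")
    case r: True
    show ?thesis
    proof (cases xs)
      case (Cons a ys)
      note xs = this
      show ?thesis
      proof (cases ys)
        case (Cons b zs)
        then show ?thesis using r xs
          by (cases zs) (auto simp: translate_rel_code_def list_encode_eq[of _ "[]", simplified])
      qed (use r xs in \<open>simp add: translate_rel_code_def\<close>)
    qed (use r in \<open>simp add: translate_rel_code_def\<close>)
  qed (simp add: translate_rel_code_def)
  from this[of "list_decode c"] show ?thesis by simp
qed

lemma computable_nary_translate_rel_code:
  "computable_nary k a \<Longrightarrow> computable_nary k b \<Longrightarrow>
   computable_nary k (\<lambda>xs. translate_rel_code p0 (a xs) (b xs))"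
  unfolding translate_rel_code_def
  by (simp only: code.simps list_encode.simps)
    (intro computable_nary_intros computable_nary_code_Subset_fm)

definition translate_code_step :: "fm \<Rightarrow> (nat \<Rightarrow> nat) \<Rightarrow> nat \<Rightarrow> nat" where
  "translate_code_step p0 G n =
    (let t = fst_decode n; r = snd_decode n in
     if t = 0 then code (Conj (Subset_fm p0 (2 * fst_decode r) (2 * snd_decode r))
                              (Subset_fm p0 (2 * snd_decode r) (2 * fst_decode r)))
     else if t = 1 then translate_rel_code p0 (fst_decode r) (snd_decode r)
     else if t = 2 then prod_encode (2, G r)
     else if t = 3 then prod_encode (3, prod_encode (G (fst_decode r), G (snd_decode r)))
     else if t = 4 then prod_encode (4, prod_encode (2 * fst_decode r,
       prod_encode (3, prod_encode (code (Set_fm (2 * fst_decode r)), G (snd_decode r)))))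
     else code (Rel 7 []))"

lemma translate_code_unfold: "translate_code p0 n = translate_code_step p0 (translate_code p0) n"
  unfolding translate_code_def translate_code_step_def
  by (subst decode_fm.simps)
    (simp add: Let_def Set_fm_def translate_rel_code_eq)

lemma translate_code_step_cong:
  "(\<And>k. k < n \<Longrightarrow> G k = G' k) \<Longrightarrow> translate_code_step p0 G n = translate_code_step p0 G' n"
  unfolding translate_code_step_def Let_def by (simp add: snd_decode_less decode_components_less)

lemma computable_translate_code: "computable (translate_code p0)"
proof -
  have "computable_nary 2 (\<lambda>xs. translate_code_step p0 (\<lambda>k. history_lookup (xs ! 1) (xs ! 0 - Suc k)) (xs ! 0))"
    unfolding translate_code_step_def Set_fm_def Let_def
    by (simp only: code.simps list_encode.simps)
      (intro computable_nary_intros computable_nary_code_Subset_fm computable_nary_translate_rel_code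
        computable_nary_nth; simp)
  moreover have "translate_code p0 n =
      translate_code_step p0 (\<lambda>k. history_lookup (history (translate_code p0) n) (n - Suc k)) n" for n
    by (subst translate_code_unfold) (rule translate_code_step_cong, simp add: history_lookup_history)
  ultimately have "computable_nary 1 (\<lambda>xs. translate_code p0 (xs ! 0))"
    by (rule computable_nary_course_of_values)
  then show ?thesis using computable_nary_imp_computable by fastforce
qed


context covering_formula
begin

lemma mem_FO_open_lattice_iff_translate_code:
  "n \<in> FO_open_lattice X \<longleftrightarrow> translate_code p0 n \<in> FO_N2"
proof -
  have "translate_code p0 n \<in> FO_N2 \<longleftrightarrow> sentence n2_sig (translate p0 (decode_fm n)) \<and>
      (\<forall>e. range e \<subseteq> UNIV \<longrightarrow> sat_N2 e (translate p0 (decode_fm n)))"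
    unfolding translate_code_def FO_N2_def by (rule mem_FO_theory_code_iff)
  then show ?thesis
    unfolding mem_FO_open_lattice_iff sentence_translate_iff[OF wf_p0 fv_p0]
    using valid_iff_valid_translate by blast
qed

end

theorem proposition3p1:
  fixes X :: "'a topology" and \<beta> \<kappa> :: "nat \<Rightarrow> 'a set"
  assumes "AnLCS X \<beta> \<kappa>"
  shows "FO_open_lattice X \<le>\<^sub>m FO_N2"
proof -
  have "analytical {prod_encode (i, k) | i k. \<kappa> i \<subseteq> \<Union> (\<beta> ` set_decode k)}"
    using assms unfolding AnLCS_def by blast
  then obtain p0 where wf: "wf_fm n2_sig p0" and fv: "fv p0 \<subseteq> {0}"
    and p0: "\<And>n. n \<in> {prod_encode (i, k) | i k. \<kappa> i \<subseteq> \<Union> (\<beta> ` set_decode k)} \<longleftrightarrow> sat_N2 (\<lambda>_. Inl n) p0"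
    unfolding analytical_def by blast
  have "sat_N2 (\<lambda>_. Inl (prod_encode (i, k))) p0 \<longleftrightarrow> \<kappa> i \<subseteq> \<Union> (\<beta> ` set_decode k)" for i k
    using p0[of "prod_encode (i, k)"] by simp
  then interpret covering_formula X \<beta> \<kappa> p0
    by (rule covering_formula.intro[OF assms wf fv])
  show ?thesis
    unfolding many_one_reducible_def
    using computable_translate_code mem_FO_open_lattice_iff_translate_code by blast
qed

end
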